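(* Let $t\ge 1$ and let $\kappa_1,\ldots,\kappa_t$ be integers with $\kappa_i\ge 2$ and $\kappa_1\kappa_2\cdots\kappa_t=n$. Let $\ell_{i,j}$ be integers with $0\le \ell_{i,j}\le \kappa_j-1$ for $i=2,\ldots,t$ and $j=1,\ldots,i-1$. Then, with $K=(\kappa_i)$ and $L=(\ell_{i,j})$, the set $\Gamma(K,L)$ is an Abelian group (under the multiplication of the quotient ring) of order $|\Gamma(K,L)|=n$.
   Context: Let $I$ be the ideal of the polynomial ring $\mathbb{R}[x_1,\ldots,x_t]$ generated by $x_1^{\kappa_1}-1$ and by $x_i^{\kappa_i}-x_1^{\ell_{i,1}}\cdots x_{i-1}^{\ell_{i,i-1}}$ for $i=2,\ldots,t$. The monomial group $\Gamma(K,L)$ is the set of residue classes in $\mathbb{R}[x_1,\ldots,x_t]/I$ of the monomials $x_1^{j_1}x_2^{j_2}\cdots x_t^{j_t}$ with $0\le j_i\le \kappa_i-1$ for all $i$; a product of two such monomials is reduced back to this form using the relations $x_1^{\kappa_1}=1$ and $x_i^{\kappa_i}=x_1^{\ell_{i,1}}\cdots x_{i-1}^{\ell_{i,i-1}}$ ($i\ge 2$). *)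

theory Defs
  imports Complex_Main "HOL-Library.Poly_Mapping" "HOL-Algebra.Group"
begin

type_synonym mpoly = "(nat \<Rightarrow>\<^sub>0 nat) \<Rightarrow>\<^sub>0 real"

definition Xv :: "nat \<Rightarrow> mpoly" where
  "Xv i = Poly_Mapping.single (Poly_Mapping.single i 1) 1"

definition gen :: "(nat \<Rightarrow> nat) \<Rightarrow> (nat \<Rightarrow> nat \<Rightarrow> nat) \<Rightarrow> nat \<Rightarrow> mpoly" where
  "gen K L i = (if i = 1 then Xv 1 ^ K 1 - 1
                 else Xv i ^ K i - (\<Prod>j\<in>{1..<i}. Xv j ^ L i j))"

text \<open>The ideal of R[x_1,...,x_t] generated by gen 1, ..., gen t.\<close>
definition idealI :: "nat \<Rightarrow> (nat \<Rightarrow> nat) \<Rightarrow> (nat \<Rightarrow> nat \<Rightarrow> nat) \<Rightarrow> mpoly set" where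
  "idealI t K L = {p. \<exists>c. (\<forall>i\<in>{1..t}. \<forall>e. Poly_Mapping.lookup (c i) e \<noteq> 0 \<longrightarrow> (\<forall>k. k \<notin> {1..t} \<longrightarrow> Poly_Mapping.lookup e k = 0))
                        \<and> p = (\<Sum>i\<in>{1..t}. c i * gen K L i)}"

definition polys :: "nat \<Rightarrow> mpoly set" where
  "polys t = {p. \<forall>e. Poly_Mapping.lookup p e \<noteq> 0 \<longrightarrow> (\<forall>k. k \<notin> {1..t} \<longrightarrow> Poly_Mapping.lookup e k = 0)}"

definition cls :: "nat \<Rightarrow> (nat \<Rightarrow> nat) \<Rightarrow> (nat \<Rightarrow> nat \<Rightarrow> nat) \<Rightarrow> mpoly \<Rightarrow> mpoly set" where
  "cls t K L p = {q \<in> polys t. q - p \<in> idealI t K L}"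

definition qmult :: "nat \<Rightarrow> (nat \<Rightarrow> nat) \<Rightarrow> (nat \<Rightarrow> nat \<Rightarrow> nat) \<Rightarrow> mpoly set \<Rightarrow> mpoly set \<Rightarrow> mpoly set" where
  "qmult t K L A B = {q \<in> polys t. \<exists>a\<in>A. \<exists>b\<in>B. q - a * b \<in> idealI t K L}"

definition mon :: "nat \<Rightarrow> (nat \<Rightarrow> nat) \<Rightarrow> mpoly" where
  "mon t j = (\<Prod>i\<in>{1..t}. Xv i ^ j i)"

definition Gamma :: "nat \<Rightarrow> (nat \<Rightarrow> nat) \<Rightarrow> (nat \<Rightarrow> nat \<Rightarrow> nat) \<Rightarrow> mpoly set set" where
  "Gamma t K L = {cls t K L (mon t j) | j. \<forall>i\<in>{1..t}. j i < K i}"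

definition GammaGroup :: "nat \<Rightarrow> (nat \<Rightarrow> nat) \<Rightarrow> (nat \<Rightarrow> nat \<Rightarrow> nat) \<Rightarrow> mpoly set monoid" where
  "GammaGroup t K L = \<lparr>carrier = Gamma t K L, mult = qmult t K L, one = cls t K L 1\<rparr>"

end

theory Submission
  imports Defs
begin

text \<open>Modulo \<open>I\<close> each \<open>x\<^sub>i ^ \<kappa>\<^sub>i\<close> can be replaced by a monomial in
  \<open>x\<^sub>1, \<dots>, x\<^sub>i\<^sub>-\<^sub>1\<close>; reducing from the top index downwards, every monomial is
  congruent to a standard one, so \<open>\<Gamma>(K,L)\<close> is closed under the commutative, associative
  multiplication of the quotient ring. Moreover \<open>x\<^sub>i ^ (\<kappa>\<^sub>1 \<cdots> \<kappa>\<^sub>i) \<equiv> 1\<close>,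
  so every class has finite order and hence an inverse.

  Distinct standard monomials are separated by evaluation at complex zeros of \<open>I\<close>, which exist
  since the relations can be solved for one variable after another. If two exponent vectors agree
  above \<open>i\<close> and differ at \<open>i\<close>, multiplying the \<open>i\<close>-th coordinate of a zero by a
  primitive \<open>\<kappa>\<^sub>i\<close>-th root of unity \<open>\<zeta>\<close> and re-solving for the later coordinates
  gives another zero, at which the ratio of the two monomials has changed by a power
  \<open>\<zeta> ^ (j\<^sub>i - j'\<^sub>i) \<noteq> 1\<close>.\<close>

lemma polys_iff: "p \<in> polys t \<longleftrightarrow> (\<forall>e\<in>Poly_Mapping.keys p. Poly_Mapping.keys e \<subseteq> {1..t})"
proof -
  have "Poly_Mapping.keys e \<subseteq> {1..t} \<longleftrightarrow> (\<forall>k. k \<notin> {1..t} \<longrightarrow> Poly_Mapping.lookup e k = 0)"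
    for e :: "nat \<Rightarrow>\<^sub>0 nat"
    by (auto simp: in_keys_iff)
  then show ?thesis
    unfolding polys_def by (simp only: in_keys_iff Ball_def mem_Collect_eq)
qed

lemma polys_add: "p \<in> polys t \<Longrightarrow> q \<in> polys t \<Longrightarrow> p + q \<in> polys t"
  unfolding polys_iff using keys_add[of p q] by blast

lemma polys_uminus: "p \<in> polys t \<Longrightarrow> - p \<in> polys t"
  unfolding polys_iff by simp

lemma polys_mult:
  assumes "p \<in> polys t" "q \<in> polys t"
  shows "p * q \<in> polys t"
  unfolding polys_iff
proof
  fix e
  assume "e \<in> Poly_Mapping.keys (p * q)"
  then obtain a b where "e = a + b" "a \<in> Poly_Mapping.keys p" "b \<in> Poly_Mapping.keys q"
    using keys_mult[of p q] by blast
  then show "Poly_Mapping.keys e \<subseteq> {1..t}"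
    using assms keys_add[of a b] unfolding polys_iff by blast
qed

lemma polys_0: "0 \<in> polys t"
  unfolding polys_iff by simp

lemma polys_1: "1 \<in> polys t"
  unfolding polys_iff by simp

lemma polys_power: "p \<in> polys t \<Longrightarrow> p ^ m \<in> polys t"
  by (induction m) (auto intro: polys_mult polys_1)

lemma polys_prod: "(\<And>i. i \<in> A \<Longrightarrow> f i \<in> polys t) \<Longrightarrow> prod f A \<in> polys t"
  by (induction A rule: infinite_finite_induct) (auto intro: polys_mult polys_1)

lemma Xv_in_polys: "i \<in> {1..t} \<Longrightarrow> Xv i \<in> polys t"
  unfolding polys_iff Xv_def by simp

lemma idealI_iff:
  "p \<in> idealI t K L \<longleftrightarrow> (\<exists>c. (\<forall>i\<in>{1..t}. c i \<in> polys t) \<and> p = (\<Sum>i\<in>{1..t}. c i * gen K L i))"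
  unfolding idealI_def polys_def by simp

lemma idealI_0: "0 \<in> idealI t K L"
  unfolding idealI_iff by (intro exI[of _ "\<lambda>_. 0"]) (simp add: polys_0)

lemma idealI_add:
  assumes "a \<in> idealI t K L" "b \<in> idealI t K L"
  shows "a + b \<in> idealI t K L"
proof -
  obtain c d where "\<forall>i\<in>{1..t}. c i \<in> polys t" "a = (\<Sum>i\<in>{1..t}. c i * gen K L i)"
    and "\<forall>i\<in>{1..t}. d i \<in> polys t" "b = (\<Sum>i\<in>{1..t}. d i * gen K L i)"
    using assms unfolding idealI_iff by blast
  then show ?thesis
    unfolding idealI_iff
    by (intro exI[of _ "\<lambda>i. c i + d i"]) (simp add: polys_add sum.distrib distrib_right)
qed

lemma idealI_uminus:
  assumes "a \<in> idealI t K L"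
  shows "- a \<in> idealI t K L"
proof -
  obtain c where "\<forall>i\<in>{1..t}. c i \<in> polys t" "a = (\<Sum>i\<in>{1..t}. c i * gen K L i)"
    using assms unfolding idealI_iff by blast
  then show ?thesis
    unfolding idealI_iff by (intro exI[of _ "\<lambda>i. - c i"]) (simp add: polys_uminus sum_negf)
qed

lemma idealI_mult_left:
  assumes "r \<in> polys t" "a \<in> idealI t K L"
  shows "r * a \<in> idealI t K L"
proof -
  obtain c where "\<forall>i\<in>{1..t}. c i \<in> polys t" "a = (\<Sum>i\<in>{1..t}. c i * gen K L i)"
    using assms(2) unfolding idealI_iff by blast
  then show ?thesis
    unfolding idealI_iff
    using assms(1) by (intro exI[of _ "\<lambda>i. r * c i"]) (simp add: polys_mult sum_distrib_left mult.assoc)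
qed

lemma gen_eq: "1 \<le> i \<Longrightarrow> gen K L i = Xv i ^ K i - (\<Prod>k\<in>{1..<i}. Xv k ^ L i k)"
  unfolding gen_def by simp

lemma gen_in_idealI:
  assumes "i \<in> {1..t}"
  shows "gen K L i \<in> idealI t K L"
proof -
  have "(\<Sum>k\<in>{1..t}. (if k = i then 1 else 0) * gen K L k) = (\<Sum>k\<in>{1..t}. if k = i then gen K L k else 0)"
    by (rule sum.cong) auto
  also have "\<dots> = gen K L i"
    using assms by simp
  finally show ?thesis
    unfolding idealI_iff by (intro exI[of _ "\<lambda>k. if k = i then 1 else 0"]) (simp add: polys_0 polys_1)
qed

definition ideal_cong :: "nat \<Rightarrow> (nat \<Rightarrow> nat) \<Rightarrow> (nat \<Rightarrow> nat \<Rightarrow> nat) \<Rightarrow> mpoly \<Rightarrow> mpoly \<Rightarrow> bool" where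
  "ideal_cong t K L p q \<longleftrightarrow> p - q \<in> idealI t K L"

lemma ideal_cong_refl: "ideal_cong t K L p p"
  unfolding ideal_cong_def by (simp add: idealI_0)

lemma ideal_cong_sym: "ideal_cong t K L p q \<Longrightarrow> ideal_cong t K L q p"
  unfolding ideal_cong_def by (metis idealI_uminus minus_diff_eq)

lemma ideal_cong_trans: "ideal_cong t K L p q \<Longrightarrow> ideal_cong t K L q r \<Longrightarrow> ideal_cong t K L p r"
  unfolding ideal_cong_def using idealI_add by fastforce

lemma ideal_cong_mult:
  assumes "ideal_cong t K L a b" "ideal_cong t K L c d" "b \<in> polys t" "c \<in> polys t"
  shows "ideal_cong t K L (a * c) (b * d)"
proof -
  have "c * (a - b) + b * (c - d) \<in> idealI t K L"
    using assms by (intro idealI_add idealI_mult_left) (simp_all add: ideal_cong_def)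
  moreover have "a * c - b * d = c * (a - b) + b * (c - d)"
    by (simp add: algebra_simps)
  ultimately show ?thesis
    by (simp add: ideal_cong_def)
qed

lemma ideal_cong_power:
  assumes "ideal_cong t K L a b" "a \<in> polys t" "b \<in> polys t"
  shows "ideal_cong t K L (a ^ m) (b ^ m)"
  by (induction m) (simp_all add: ideal_cong_refl ideal_cong_mult assms polys_power)

lemma ideal_cong_prod:
  assumes "\<And>i. i \<in> A \<Longrightarrow> ideal_cong t K L (f i) (g i)"
    and "\<And>i. i \<in> A \<Longrightarrow> f i \<in> polys t" "\<And>i. i \<in> A \<Longrightarrow> g i \<in> polys t"
  shows "ideal_cong t K L (prod f A) (prod g A)"
  using assms
  by (induction A rule: infinite_finite_induct) (simp_all add: ideal_cong_refl ideal_cong_mult polys_prod)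

lemma cls_eq_iff:
  assumes "p \<in> polys t" "q \<in> polys t"
  shows "cls t K L p = cls t K L q \<longleftrightarrow> ideal_cong t K L p q"
proof
  assume "cls t K L p = cls t K L q"
  moreover have "p \<in> cls t K L p"
    using assms by (simp add: cls_def idealI_0)
  ultimately show "ideal_cong t K L p q"
    by (simp add: cls_def ideal_cong_def)
next
  assume "ideal_cong t K L p q"
  then show "cls t K L p = cls t K L q"
    unfolding cls_def ideal_cong_def[symmetric] by (meson ideal_cong_sym ideal_cong_trans)
qed

lemma qmult_cls:
  assumes "a \<in> polys t" "b \<in> polys t"
  shows "qmult t K L (cls t K L a) (cls t K L b) = cls t K L (a * b)"
proof (intro equalityI subsetI)
  fix q
  assume "q \<in> qmult t K L (cls t K L a) (cls t K L b)"
  then obtain a' b' where q: "q \<in> polys t" "ideal_cong t K L q (a' * b')"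
    and a': "ideal_cong t K L a' a" and b': "b' \<in> polys t" "ideal_cong t K L b' b"
    unfolding qmult_def cls_def ideal_cong_def by blast
  have "ideal_cong t K L (a' * b') (a * b)"
    using ideal_cong_mult[OF a' b'(2) assms(1) b'(1)] .
  with q show "q \<in> cls t K L (a * b)"
    unfolding cls_def ideal_cong_def[symmetric] by (blast intro: ideal_cong_trans)
next
  fix q
  assume "q \<in> cls t K L (a * b)"
  moreover have "a \<in> cls t K L a" "b \<in> cls t K L b"
    using assms by (simp_all add: cls_def idealI_0)
  ultimately show "q \<in> qmult t K L (cls t K L a) (cls t K L b)"
    unfolding qmult_def cls_def by blast
qed

section \<open>Reduction of monomials\<close>

lemma mon_in_polys: "mon t j \<in> polys t"
  unfolding mon_def by (intro polys_prod polys_power Xv_in_polys)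

lemma mon_add: "mon t (\<lambda>i. j i + j' i) = mon t j * mon t j'"
  unfolding mon_def by (simp add: power_add prod.distrib)

lemma mon_0: "mon t (\<lambda>_. 0) = 1"
  unfolding mon_def by simp

lemma mon_power: "mon t j ^ m = mon t (\<lambda>i. m * j i)"
  unfolding mon_def by (simp add: prod_power_distrib power_mult[symmetric] mult.commute)

lemma mon_cong: "(\<And>i. i \<in> {1..t} \<Longrightarrow> j i = j' i) \<Longrightarrow> mon t j = mon t j'"
  unfolding mon_def by (rule prod.cong) auto

lemma mon_single: "i \<in> {1..t} \<Longrightarrow> mon t (\<lambda>k. if k = i then c else 0) = Xv i ^ c"
  unfolding mon_def by (simp add: if_distrib prod.delta cong: if_cong)

definition rel_exp :: "(nat \<Rightarrow> nat \<Rightarrow> nat) \<Rightarrow> nat \<Rightarrow> nat \<Rightarrow> nat" where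
  "rel_exp L i k = (if k < i then L i k else 0)"

lemma Xv_power_K_cong:
  assumes "i \<in> {1..t}"
  shows "ideal_cong t K L (Xv i ^ K i) (mon t (rel_exp L i))"
proof -
  have "{k \<in> {1..t}. k < i} = {1..<i}"
    using assms by auto
  then have "mon t (rel_exp L i) = (\<Prod>k\<in>{1..<i}. Xv k ^ L i k)"
    unfolding mon_def rel_exp_def by (simp add: if_distrib prod.inter_filter[symmetric] cong: if_cong)
  then show ?thesis
    using gen_in_idealI[OF assms, of K L] gen_eq[of i K L] assms unfolding ideal_cong_def by simp
qed

lemma mon_reduce_step:
  assumes i: "i \<in> {1..t}"
  shows "ideal_cong t K L (mon t j)
           (mon t (\<lambda>k. (j(i := j i mod K i)) k + j i div K i * rel_exp L i k))"
proof -
  define j0 where "j0 = j(i := j i mod K i)"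
  define q where "q = j i div K i"
  have "j = (\<lambda>k. j0 k + (if k = i then K i * q else 0))"
    unfolding j0_def q_def by auto
  then have "mon t j = mon t j0 * mon t (\<lambda>k. if k = i then K i * q else 0)"
    by (simp only: mon_add[symmetric])
  also have "\<dots> = mon t j0 * (Xv i ^ K i) ^ q"
    using i by (simp add: mon_single power_mult)
  finally have "mon t j = mon t j0 * (Xv i ^ K i) ^ q" .
  moreover have "ideal_cong t K L ((Xv i ^ K i) ^ q) (mon t (rel_exp L i) ^ q)"
    using i by (intro ideal_cong_power Xv_power_K_cong polys_power Xv_in_polys mon_in_polys)
  then have "ideal_cong t K L (mon t j0 * (Xv i ^ K i) ^ q) (mon t j0 * mon t (rel_exp L i) ^ q)"
    by (intro ideal_cong_mult ideal_cong_refl mon_in_polys polys_power Xv_in_polys i)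
  moreover have "mon t j0 * mon t (rel_exp L i) ^ q = mon t (\<lambda>k. j0 k + q * rel_exp L i k)"
    by (simp add: mon_power mon_add)
  ultimately show ?thesis
    unfolding j0_def q_def by simp
qed

lemma mon_cong_reduced_below:
  assumes Kpos: "\<forall>i\<in>{1..t}. K i > 0"
  shows "m \<le> t \<Longrightarrow> \<exists>j'. (\<forall>i\<in>{1..m}. j' i < K i) \<and> (\<forall>i>m. j' i = j i)
                          \<and> ideal_cong t K L (mon t j) (mon t j')"
proof (induction m arbitrary: j)
  case 0
  show ?case
    by (intro exI[of _ j]) (simp add: ideal_cong_refl)
next
  case (Suc m)
  define j1 where "j1 = (\<lambda>k. (j(Suc m := j (Suc m) mod K (Suc m))) k + j (Suc m) div K (Suc m) * rel_exp L (Suc m) k)"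
  have i: "Suc m \<in> {1..t}"
    using Suc.prems by simp
  obtain j' where j': "\<forall>i\<in>{1..m}. j' i < K i" "\<forall>i>m. j' i = j1 i" "ideal_cong t K L (mon t j1) (mon t j')"
    using Suc.IH[of j1] Suc.prems by auto
  have "j' (Suc m) < K (Suc m)"
    using j'(2) Kpos i by (simp add: j1_def rel_exp_def)
  then have "\<forall>i\<in>{1..Suc m}. j' i < K i"
    using j'(1) by (auto simp: le_Suc_eq)
  moreover have "\<forall>i>Suc m. j' i = j i"
    using j'(2) by (simp add: j1_def rel_exp_def)
  moreover have "ideal_cong t K L (mon t j) (mon t j')"
    using mon_reduce_step[OF i, of K L j] j'(3) unfolding j1_def by (rule ideal_cong_trans)
  ultimately show ?case
    by blast
qed

lemma cls_mon_in_Gamma: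
  assumes "\<forall>i\<in>{1..t}. K i > 0"
  shows "cls t K L (mon t j) \<in> Gamma t K L"
proof -
  obtain j' where "\<forall>i\<in>{1..t}. j' i < K i" "ideal_cong t K L (mon t j) (mon t j')"
    using mon_cong_reduced_below[OF assms order_refl] by blast
  then show ?thesis
    unfolding Gamma_def by (auto simp: cls_eq_iff mon_in_polys)
qed

lemma ideal_cong_power_dvd_1:
  assumes "ideal_cong t K L (x ^ a) 1" "x \<in> polys t" "a dvd b"
  shows "ideal_cong t K L (x ^ b) 1"
proof -
  obtain c where "b = a * c"
    using assms(3) by blast
  then have "x ^ b = (x ^ a) ^ c"
    by (simp add: power_mult)
  then show ?thesis
    using ideal_cong_power[OF assms(1), of c] assms(2) by (simp add: polys_power polys_1)
qed

text \<open>By induction on \<open>i\<close>: \<open>x\<^sub>i ^ \<kappa>\<^sub>i\<close> is congruent to a monomial in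
  earlier variables, each of which is killed by the exponent \<open>\<kappa>\<^sub>1 \<cdots> \<kappa>\<^sub>i\<^sub>-\<^sub>1\<close>.\<close>
lemma Xv_power_prod_K_cong_1:
  assumes "i \<in> {1..t}"
  shows "ideal_cong t K L (Xv i ^ (\<Prod>k\<in>{1..i}. K k)) 1"
  using assms
proof (induction i rule: less_induct)
  case (less i)
  define Q where "Q = (\<Prod>k\<in>{1..<i}. K k)"
  have "{1..i} = insert i {1..<i}"
    using less.prems by auto
  then have "Xv i ^ (\<Prod>k\<in>{1..i}. K k) = (Xv i ^ K i) ^ Q"
    unfolding Q_def by (simp add: power_mult)
  moreover have "ideal_cong t K L ((Xv i ^ K i) ^ Q) (mon t (rel_exp L i) ^ Q)"
    using less.prems by (intro ideal_cong_power Xv_power_K_cong polys_power Xv_in_polys mon_in_polys)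
  moreover have "ideal_cong t K L (mon t (rel_exp L i) ^ Q) 1"
    unfolding mon_power unfolding mon_def
  proof (rule ideal_cong_prod[where g = "\<lambda>_. 1", simplified])
    fix k
    assume k: "k \<in> {1..t}"
    show "ideal_cong t K L (Xv k ^ (Q * rel_exp L i k)) 1"
    proof (cases "k < i")
      case True
      have "(\<Prod>k\<in>{1..k}. K k) dvd Q * rel_exp L i k"
        unfolding Q_def using True by (intro dvd_mult2 prod_dvd_prod_subset) auto
      then show ?thesis
        by (rule ideal_cong_power_dvd_1[OF less.IH[OF True k] Xv_in_polys[OF k]])
    qed (simp add: rel_exp_def ideal_cong_refl)
  qed (simp_all add: polys_power Xv_in_polys polys_1)
  ultimately show ?case
    using ideal_cong_trans by simp
qed

lemma mon_power_prod_K_cong_1: "ideal_cong t K L (mon t j ^ (\<Prod>k\<in>{1..t}. K k)) 1"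
  unfolding mon_power unfolding mon_def
proof (rule ideal_cong_prod[where g = "\<lambda>_. 1", simplified])
  fix i
  assume i: "i \<in> {1..t}"
  have "(\<Prod>k\<in>{1..i}. K k) dvd (\<Prod>k\<in>{1..t}. K k) * j i"
    using i by (intro dvd_mult2 prod_dvd_prod_subset) auto
  then show "ideal_cong t K L (Xv i ^ ((\<Prod>k\<in>{1..t}. K k) * j i)) 1"
    by (rule ideal_cong_power_dvd_1[OF Xv_power_prod_K_cong_1[OF i] Xv_in_polys[OF i]])
qed (simp_all add: polys_power Xv_in_polys polys_1)

lemma GammaE:
  assumes "x \<in> Gamma t K L"
  obtains j where "x = cls t K L (mon t j)"
  using assms unfolding Gamma_def by blast

lemma cls_mon_inverse:
  assumes "\<forall>i\<in>{1..t}. K i > 0"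
  defines "N \<equiv> \<Prod>k\<in>{1..t}. K k"
  shows "qmult t K L (cls t K L (mon t j ^ (N - 1))) (cls t K L (mon t j)) = cls t K L 1"
proof -
  have "N > 0"
    using assms by (simp add: prod_pos)
  then have "mon t j ^ (N - 1) * mon t j = mon t j ^ N"
    by (metis power_minus_mult)
  then show ?thesis
    using mon_power_prod_K_cong_1[of t K L j]
    by (simp add: N_def qmult_cls cls_eq_iff mon_in_polys polys_power polys_1)
qed

lemma comm_group_GammaGroup:
  assumes Kpos: "\<forall>i\<in>{1..t}. K i > 0"
  shows "comm_group (GammaGroup t K L)"
proof (rule comm_groupI; unfold GammaGroup_def monoid.select_convs partial_object.select_convs)
  fix x y
  assume "x \<in> Gamma t K L" "y \<in> Gamma t K L"
  then obtain a b where x: "x = cls t K L (mon t a)" and y: "y = cls t K L (mon t b)"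
    by (metis GammaE)
  show "qmult t K L x y \<in> Gamma t K L"
    unfolding x y qmult_cls[OF mon_in_polys mon_in_polys] mon_add[symmetric]
    by (rule cls_mon_in_Gamma[OF Kpos])
  show "qmult t K L x y = qmult t K L y x"
    unfolding x y by (simp add: qmult_cls mon_in_polys mult.commute)
next
  show "cls t K L 1 \<in> Gamma t K L"
    using cls_mon_in_Gamma[OF Kpos, of L "\<lambda>_. 0"] by (simp add: mon_0)
next
  fix x y z
  assume "x \<in> Gamma t K L" "y \<in> Gamma t K L" "z \<in> Gamma t K L"
  then obtain a b c where "x = cls t K L (mon t a)" "y = cls t K L (mon t b)" "z = cls t K L (mon t c)"
    by (metis GammaE)
  then show "qmult t K L (qmult t K L x y) z = qmult t K L x (qmult t K L y z)"
    by (simp add: qmult_cls mon_in_polys polys_mult mult.assoc)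
next
  fix x
  assume "x \<in> Gamma t K L"
  then obtain a where x: "x = cls t K L (mon t a)"
    by (rule GammaE)
  show "qmult t K L (cls t K L 1) x = x"
    unfolding x by (simp add: qmult_cls mon_in_polys polys_1)
  have "cls t K L (mon t a ^ ((\<Prod>k\<in>{1..t}. K k) - 1)) \<in> Gamma t K L"
    unfolding mon_power by (rule cls_mon_in_Gamma[OF Kpos])
  then show "\<exists>y\<in>Gamma t K L. qmult t K L y x = cls t K L 1"
    unfolding x using cls_mon_inverse[OF Kpos] by blast
qed

section \<open>Evaluation at complex points\<close>

definition eval_monom :: "(nat \<Rightarrow> complex) \<Rightarrow> (nat \<Rightarrow>\<^sub>0 nat) \<Rightarrow> complex" where
  "eval_monom v e = (\<Prod>k\<in>Poly_Mapping.keys e. v k ^ Poly_Mapping.lookup e k)"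

definition eval_poly :: "(nat \<Rightarrow> complex) \<Rightarrow> mpoly \<Rightarrow> complex" where
  "eval_poly v p = (\<Sum>e\<in>Poly_Mapping.keys p. of_real (Poly_Mapping.lookup p e) * eval_monom v e)"

lemma eval_monom_superset:
  "finite S \<Longrightarrow> Poly_Mapping.keys e \<subseteq> S \<Longrightarrow> eval_monom v e = (\<Prod>k\<in>S. v k ^ Poly_Mapping.lookup e k)"
  unfolding eval_monom_def by (rule prod.mono_neutral_left) (auto simp: in_keys_iff)

lemma eval_monom_add: "eval_monom v (e + f) = eval_monom v e * eval_monom v f"
proof -
  let ?S = "Poly_Mapping.keys e \<union> Poly_Mapping.keys f"
  have "eval_monom v (e + f) = (\<Prod>k\<in>?S. v k ^ Poly_Mapping.lookup (e + f) k)"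
    by (rule eval_monom_superset) (auto simp: keys_add[of e f])
  also have "\<dots> = (\<Prod>k\<in>?S. v k ^ Poly_Mapping.lookup e k) * (\<Prod>k\<in>?S. v k ^ Poly_Mapping.lookup f k)"
    by (simp add: lookup_add power_add prod.distrib)
  also have "\<dots> = eval_monom v e * eval_monom v f"
    by (simp add: eval_monom_superset[symmetric])
  finally show ?thesis .
qed

lemma eval_poly_superset:
  "finite S \<Longrightarrow> Poly_Mapping.keys p \<subseteq> S \<Longrightarrow>
     eval_poly v p = (\<Sum>e\<in>S. of_real (Poly_Mapping.lookup p e) * eval_monom v e)"
  unfolding eval_poly_def by (rule sum.mono_neutral_left) (auto simp: in_keys_iff)

lemma eval_poly_add: "eval_poly v (p + q) = eval_poly v p + eval_poly v q"
proof -
  let ?S = "Poly_Mapping.keys p \<union> Poly_Mapping.keys q"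
  have "eval_poly v (p + q) = (\<Sum>e\<in>?S. of_real (Poly_Mapping.lookup (p + q) e) * eval_monom v e)"
    by (rule eval_poly_superset) (auto simp: keys_add[of p q])
  also have "\<dots> = (\<Sum>e\<in>?S. of_real (Poly_Mapping.lookup p e) * eval_monom v e)
                 + (\<Sum>e\<in>?S. of_real (Poly_Mapping.lookup q e) * eval_monom v e)"
    by (simp add: lookup_add distrib_right sum.distrib)
  also have "\<dots> = eval_poly v p + eval_poly v q"
    by (simp add: eval_poly_superset[symmetric])
  finally show ?thesis .
qed

lemma eval_poly_single: "eval_poly v (Poly_Mapping.single e c) = of_real c * eval_monom v e"
  by (subst eval_poly_superset[of "{e}"]) auto

lemma eval_poly_sum: "eval_poly v (sum f A) = (\<Sum>a\<in>A. eval_poly v (f a))"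
  by (induction A rule: infinite_finite_induct) (simp_all add: eval_poly_add eval_poly_def[of _ 0])

lemma poly_mapping_sum_single_lookup:
  "p = (\<Sum>e\<in>Poly_Mapping.keys p. Poly_Mapping.single e (Poly_Mapping.lookup p e))"
  by (rule poly_mapping_eqI) (auto simp: lookup_sum lookup_single when_def in_keys_iff)

lemma eval_poly_mult: "eval_poly v (p * q) = eval_poly v p * eval_poly v q"
proof -
  have "p * q = (\<Sum>e\<in>Poly_Mapping.keys p. Poly_Mapping.single e (Poly_Mapping.lookup p e))
              * (\<Sum>f\<in>Poly_Mapping.keys q. Poly_Mapping.single f (Poly_Mapping.lookup q f))"
    by (simp flip: poly_mapping_sum_single_lookup)
  also have "\<dots> = (\<Sum>e\<in>Poly_Mapping.keys p. \<Sum>f\<in>Poly_Mapping.keys q.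
                    Poly_Mapping.single (e + f) (Poly_Mapping.lookup p e * Poly_Mapping.lookup q f))"
    by (simp add: sum_product mult_single)
  finally have pq: "p * q = \<dots>" .
  show ?thesis
    unfolding pq eval_poly_sum eval_poly_single
    by (simp add: eval_monom_add sum_product eval_poly_def mult_ac)
qed

lemma eval_poly_1: "eval_poly v 1 = 1"
  using eval_poly_single[of v 0 1] by (simp add: eval_monom_def)

lemma eval_poly_diff: "eval_poly v (p - q) = eval_poly v p - eval_poly v q"
  using eval_poly_add[of v "p - q" q] by simp

lemma eval_poly_power: "eval_poly v (p ^ m) = eval_poly v p ^ m"
  by (induction m) (simp_all add: eval_poly_1 eval_poly_mult)

lemma eval_poly_prod: "eval_poly v (prod f A) = (\<Prod>a\<in>A. eval_poly v (f a))"
  by (induction A rule: infinite_finite_induct) (simp_all add: eval_poly_1 eval_poly_mult)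

lemma eval_poly_Xv: "eval_poly v (Xv i) = v i"
  unfolding Xv_def eval_poly_single eval_monom_def by simp

lemma eval_poly_mon: "eval_poly v (mon t j) = (\<Prod>k\<in>{1..t}. v k ^ j k)"
  unfolding mon_def by (simp add: eval_poly_prod eval_poly_power eval_poly_Xv)

definition solves_relations :: "nat \<Rightarrow> (nat \<Rightarrow> nat) \<Rightarrow> (nat \<Rightarrow> nat \<Rightarrow> nat) \<Rightarrow> (nat \<Rightarrow> complex) \<Rightarrow> bool" where
  "solves_relations m K L v \<longleftrightarrow> (\<forall>k\<in>{1..m}. v k ^ K k = (\<Prod>i\<in>{1..<k}. v i ^ L k i))"

lemma eval_poly_idealI:
  assumes "solves_relations t K L v" "p \<in> idealI t K L"
  shows "eval_poly v p = 0"
proof -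
  have "eval_poly v (gen K L k) = 0" if "k \<in> {1..t}" for k
    using assms(1) that unfolding solves_relations_def
    by (simp add: gen_eq eval_poly_diff eval_poly_power eval_poly_prod eval_poly_Xv)
  then show ?thesis
    using assms(2) unfolding idealI_iff by (auto simp: eval_poly_sum eval_poly_mult)
qed

lemma eval_poly_ideal_cong:
  "solves_relations t K L v \<Longrightarrow> ideal_cong t K L p q \<Longrightarrow> eval_poly v p = eval_poly v q"
  unfolding ideal_cong_def using eval_poly_idealI eval_poly_diff by fastforce

lemma solves_relations_nonzero:
  assumes "\<forall>i\<in>{1..t}. K i > 0" "solves_relations t K L v"
  shows "k \<in> {1..t} \<Longrightarrow> v k \<noteq> 0"
proof (induction k rule: less_induct)
  case (less k)
  have "(\<Prod>i\<in>{1..<k}. v i ^ L k i) \<noteq> 0"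
    using less.IH less.prems by (auto simp: prod_zero_iff)
  then have "v k ^ K k \<noteq> 0"
    using assms(2) less.prems unfolding solves_relations_def by auto
  then show ?case
    using assms(1) less.prems by fastforce
qed

lemma complex_nth_root_exists: "n > 0 \<Longrightarrow> \<exists>z::complex. z ^ n = w"
proof (cases "w = 0")
  case False
  moreover assume "n > 0"
  ultimately have "card {z::complex. z ^ n = w} \<noteq> 0"
    by (simp add: card_nth_roots)
  then show ?thesis
    by (metis (mono_tags) card.empty empty_Collect_eq)
qed simp

lemma solves_relations_extend:
  assumes Kpos: "\<forall>i\<in>{1..t}. K i > 0"
    and "m \<le> t" "solves_relations m K L u"
  shows "\<exists>v. solves_relations t K L v \<and> (\<forall>k\<le>m. v k = u k)"
  using assms(2)
proof (induction t rule: dec_induct)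
  case base
  then show ?case
    using assms(3) by blast
next
  case (step n)
  then obtain v where v: "solves_relations n K L v" "\<forall>k\<le>m. v k = u k"
    by blast
  obtain z where z: "z ^ K (Suc n) = (\<Prod>i\<in>{1..<Suc n}. v i ^ L (Suc n) i)"
    using complex_nth_root_exists Kpos step.hyps(2) by fastforce
  have "solves_relations (Suc n) K L (v(Suc n := z))"
    using v(1) z unfolding solves_relations_def by (auto simp: le_Suc_eq)
  moreover have "\<forall>k\<le>m. (v(Suc n := z)) k = u k"
    using v(2) step.hyps(1) by auto
  ultimately show ?case
    by blast
qed

lemma cis_power_inj:
  fixes a b n :: nat
  assumes "a < n" "b < n" "cis (2 * pi / n) ^ a = cis (2 * pi / n) ^ b"
  shows "a = b"
proof -
  have "inj_on (\<lambda>k. cis (2 * pi * real k / real n)) {..<n}"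
    using bij_betw_roots_unity[of n] assms(1) by (simp add: bij_betw_def)
  moreover have "cis (2 * pi / n) ^ k = cis (2 * pi * real k / real n)" for k
    by (simp add: DeMoivre mult.commute)
  ultimately show ?thesis
    using assms unfolding inj_on_def by auto
qed

text \<open>With \<open>i\<close> maximal such that \<open>j i \<noteq> j' i\<close>, the factors above \<open>i\<close>
  cancel on the zero set, where all coordinates are nonzero.\<close>
lemma exponents_eq_if_eval_eq:
  assumes Kpos: "\<forall>i\<in>{1..t}. K i > 0"
    and std: "\<forall>i\<in>{1..t}. j i < K i" "\<forall>i\<in>{1..t}. j' i < K i"
    and eval_eq: "\<And>v. solves_relations t K L v \<Longrightarrow> (\<Prod>k\<in>{1..t}. v k ^ j k) = (\<Prod>k\<in>{1..t}. v k ^ j' k)"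
  shows "\<forall>i\<in>{1..t}. j i = j' i"
proof (rule ccontr)
  define D where "D = {k \<in> {1..t}. j k \<noteq> j' k}"
  define i where "i = Max D"
  assume "\<not> (\<forall>i\<in>{1..t}. j i = j' i)"
  then have "D \<noteq> {}" "finite D"
    unfolding D_def by auto
  then have i: "i \<in> {1..t}" "j i \<noteq> j' i"
    using Max_in[of D] unfolding i_def D_def by auto
  have above: "j k = j' k" if "i < k" "k \<le> t" for k
    using Max_ge[OF \<open>finite D\<close>, of k] that unfolding i_def D_def by fastforce
  have prefix: "(\<Prod>k\<in>{1..<i}. v k ^ j k) * v i ^ j i = (\<Prod>k\<in>{1..<i}. v k ^ j' k) * v i ^ j' i"
    if v: "solves_relations t K L v" for v
  proof -
    have split: "(\<Prod>k\<in>{1..t}. f k) = (\<Prod>k\<in>{1..<i}. f k) * f i * (\<Prod>k\<in>{i<..t}. f k)" for f :: "nat \<Rightarrow> complex"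
    proof -
      have "{1..t} = {1..<i} \<union> insert i {i<..t}"
        using i(1) by auto
      moreover have "prod f ({1..<i} \<union> insert i {i<..t}) = prod f {1..<i} * (f i * prod f {i<..t})"
        by (subst prod.union_disjoint) auto
      ultimately show ?thesis
        by (simp only: mult.assoc)
    qed
    have "(\<Prod>k\<in>{i<..t}. v k ^ j' k) = (\<Prod>k\<in>{i<..t}. v k ^ j k)"
      using above by simp
    moreover have "(\<Prod>k\<in>{i<..t}. v k ^ j k) \<noteq> 0"
      using solves_relations_nonzero[OF Kpos v] i(1) by (simp add: prod_zero_iff)
    ultimately show ?thesis
      using eval_eq[OF v] unfolding split[of "\<lambda>k. v k ^ j k"] split[of "\<lambda>k. v k ^ j' k"] by auto
  qed
  obtain v where v: "solves_relations t K L v"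
    using solves_relations_extend[OF Kpos, of 0 L "\<lambda>_. 0"] by (auto simp: solves_relations_def)
  define \<zeta> where "\<zeta> = cis (2 * pi / K i)"
  have "\<zeta> ^ K i = 1"
    using Kpos i(1) by (simp add: \<zeta>_def DeMoivre)
  then have "solves_relations i K L (v(i := \<zeta> * v i))"
    using v i(1) unfolding solves_relations_def by (auto simp: power_mult_distrib)
  then obtain w where w: "solves_relations t K L w" "\<forall>k\<le>i. w k = (v(i := \<zeta> * v i)) k"
    using solves_relations_extend[OF Kpos] i(1) by (metis atLeastAtMost_iff)
  let ?c = "(\<Prod>k\<in>{1..<i}. v k ^ j k) * v i ^ j i"
  have "\<zeta> ^ j i * ?c = \<zeta> ^ j' i * ?c"
    using prefix[OF w(1)] prefix[OF v] w(2) by (simp add: power_mult_distrib mult_ac)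
  moreover have "?c \<noteq> 0"
    using solves_relations_nonzero[OF Kpos v] i(1) by (simp add: prod_zero_iff)
  ultimately have "\<zeta> ^ j i = \<zeta> ^ j' i"
    by auto
  then show False
    using cis_power_inj std i unfolding \<zeta>_def by blast
qed

section \<open>The group \<open>\<Gamma>(K,L)\<close> and its order\<close>

lemma Gamma_eq_image: "Gamma t K L = (\<lambda>j. cls t K L (mon t j)) ` (\<Pi>\<^sub>E i\<in>{1..t}. {..<K i})"
proof (intro equalityI subsetI)
  fix x
  assume "x \<in> Gamma t K L"
  then obtain j where x: "x = cls t K L (mon t j)" and j: "\<forall>i\<in>{1..t}. j i < K i"
    unfolding Gamma_def by blast
  have "mon t (restrict j {1..t}) = mon t j"
    by (rule mon_cong) simp
  moreover have "restrict j {1..t} \<in> (\<Pi>\<^sub>E i\<in>{1..t}. {..<K i})"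
    using j by simp
  ultimately show "x \<in> (\<lambda>j. cls t K L (mon t j)) ` (\<Pi>\<^sub>E i\<in>{1..t}. {..<K i})"
    unfolding x by (metis image_eqI)
qed (auto simp: Gamma_def PiE_iff)

lemma card_Gamma:
  assumes Kpos: "\<forall>i\<in>{1..t}. K i > 0"
  shows "card (Gamma t K L) = (\<Prod>i\<in>{1..t}. K i)"
proof -
  have "inj_on (\<lambda>j. cls t K L (mon t j)) (\<Pi>\<^sub>E i\<in>{1..t}. {..<K i})"
  proof (rule inj_onI)
    fix j j'
    assume j: "j \<in> (\<Pi>\<^sub>E i\<in>{1..t}. {..<K i})" and j': "j' \<in> (\<Pi>\<^sub>E i\<in>{1..t}. {..<K i})"
      and "cls t K L (mon t j) = cls t K L (mon t j')"
    then have cong: "ideal_cong t K L (mon t j) (mon t j')"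
      by (simp add: cls_eq_iff mon_in_polys)
    have "(\<Prod>k\<in>{1..t}. v k ^ j k) = (\<Prod>k\<in>{1..t}. v k ^ j' k)"
      if "solves_relations t K L v" for v
      using eval_poly_ideal_cong[OF that cong] by (simp add: eval_poly_mon)
    then have "\<forall>i\<in>{1..t}. j i = j' i"
      using j j' by (intro exponents_eq_if_eval_eq[OF Kpos]) (auto simp: PiE_iff)
    then show "j = j'"
      using PiE_ext[OF j j'] by blast
  qed
  then show ?thesis
    unfolding Gamma_eq_image by (simp add: card_image card_PiE)
qed

theorem mainTheorem2:
  fixes t n :: nat and K :: "nat \<Rightarrow> nat" and L :: "nat \<Rightarrow> nat \<Rightarrow> nat"
  assumes "t \<ge> 1"
    and "\<forall>i\<in>{1..t}. K i \<ge> 2"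
    and "(\<Prod>i\<in>{1..t}. K i) = n"
    and "\<forall>i\<in>{2..t}. \<forall>j\<in>{1..<i}. L i j \<le> K j - 1"
  shows "comm_group (GammaGroup t K L) \<and> card (Gamma t K L) = n"
proof -
  have Kpos: "\<forall>i\<in>{1..t}. K i > 0"
    using assms(2) by fastforce
  show ?thesis
    using comm_group_GammaGroup[OF Kpos] card_Gamma[OF Kpos] assms(3) by simp
qed

end
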